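(* Assume that $k\mapsto\widehat{\mathit{RID}}_j(k;\varepsilon,\mathcal{F},\ell,\mathcal{P}_n,\lambda)$ and $k\mapsto\mathit{RID}_j(k;\varepsilon,\mathcal{F},\ell,\mathcal{P}_n,\lambda)$ are strictly increasing in $k\in[\phi_{\min},\phi_{\max}]$. Then, as the number $B$ of bootstrap samples tends to infinity, the interquartile range of $\widehat{\mathit{RID}}_j$ converges in probability to the interquartile range of $\mathit{RID}_j$.
   Context: Let $\mathcal{D}^{(n)}=\{(X_i,Y_i)\}_{i=1}^n$ be an observed dataset with $X_i\in\mathbb{R}^p$, $Y_i\in\mathbb{R}$, and $\mathcal{P}_n$ its empirical distribution; a bootstrap dataset $\mathcal{D}^{(n)}_b\sim\mathcal{P}_n$ consists of $n$ i.i.d. draws from $\mathcal{P}_n$. Let $\mathcal{F}$ be a model class (for a finite class $|\cdot|$ denotes cardinality; for a continuous class, volume under a measure on the class), $\ell(f,\mathcal{D};\lambda)$ a bounded loss with hyperparameters $\lambda$, $\varepsilon>0$, and $\phi_j(f,\mathcal{D})\in[\phi_{\min},\phi_{\max}]$ a bounded variable importance measure for variable $j$. The Rashomon set is $\mathcal{R}^{\varepsilon}_{\mathcal{D}}=\{f\in\mathcal{F}:\ell(f,\mathcal{D};\lambda)\le\min_{f'\in\mathcal{F}}\ell(f',\mathcal{D};\lambda)+\varepsilon\}$. Define $\mathit{RID}_j(k;\varepsilon,\mathcal{F},\ell,\mathcal{P}_n,\lambda)=\mathbb{E}_{\mathcal{D}^{(n)}_b\sim\mathcal{P}_n}\left[\frac{|\{f\in\mathcal{R}^{\varepsilon}_{\mathcal{D}^{(n)}_b}:\phi_j(f,\mathcal{D}^{(n)}_b)\le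 k\}|}{|\mathcal{R}^{\varepsilon}_{\mathcal{D}^{(n)}_b}|}\right]$ and, for $B$ i.i.d. bootstrap datasets $\mathcal{D}^{(n)}_1,\dots,\mathcal{D}^{(n)}_B\sim\mathcal{P}_n$, $\widehat{\mathit{RID}}_j(k;\varepsilon,\mathcal{F},\ell,\mathcal{P}_n,\lambda)=\frac1B\sum_{b=1}^B\frac{|\{f\in\mathcal{R}^{\varepsilon}_{\mathcal{D}^{(n)}_b}:\phi_j(f,\mathcal{D}^{(n)}_b)\le k\}|}{|\mathcal{R}^{\varepsilon}_{\mathcal{D}^{(n)}_b}|}$. For a strictly increasing CDF $G$ on $[\phi_{\min},\phi_{\max}]$, its interquartile range is determined by the quartiles $k_{0.25},k_{0.75}$ with $G(k_{0.25})=0.25$, $G(k_{0.75})=0.75$, i.e. it is $[k_{0.25},k_{0.75}]$. *)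

theory Defs
  imports "HOL-Analysis.Analysis" "HOL-Probability.Probability"
begin

text \<open>A data point (X_i, Y_i) with X_i in R^p (p given by the finite index type 'p),
  Y_i real; a dataset is a finite list of data points.\<close>
type_synonym 'p dataset = "((real ^ 'p) \<times> real) list"

text \<open>Bootstrap distribution: n i.i.d. draws from the empirical distribution P_n of D,
  realised as n i.i.d. uniform indices into D.\<close>
definition bootstrap_pmf :: "'p dataset \<Rightarrow> 'p dataset pmf" where
  "bootstrap_pmf D =
     map_pmf (\<lambda>is. map (\<lambda>i. D ! i) is) (replicate_pmf (length D) (pmf_of_set {..<length D}))"

definition bootstrap_samples :: "'p dataset \<Rightarrow> nat \<Rightarrow> 'p dataset list pmf" where
  "bootstrap_samples D B = replicate_pmf B (bootstrap_pmf D)"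

definition rashomon ::
  "'f set \<Rightarrow> ('f \<Rightarrow> 'p dataset \<Rightarrow> 'l \<Rightarrow> real) \<Rightarrow> 'l \<Rightarrow> real \<Rightarrow> 'p dataset \<Rightarrow> 'f set" where
  "rashomon F L lam \<epsilon> d = {f \<in> F. L f d lam \<le> (INF f'\<in>F. L f' d lam) + \<epsilon>}"

text \<open>Proportion (w.r.t. the measure \<mu> on the model class; counting measure for a finite
  class) of the Rashomon set on dataset d whose importance for variable j is at most k.\<close>
definition rid_frac ::
  "'f measure \<Rightarrow> 'f set \<Rightarrow> ('f \<Rightarrow> 'p dataset \<Rightarrow> 'l \<Rightarrow> real) \<Rightarrow> 'l \<Rightarrow> real
   \<Rightarrow> (nat \<Rightarrow> 'f \<Rightarrow> 'p dataset \<Rightarrow> real) \<Rightarrow> nat \<Rightarrow> real \<Rightarrow> 'p dataset \<Rightarrow> real" where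
  "rid_frac \<mu> F L lam \<epsilon> \<phi> j k d =
     measure \<mu> {f \<in> rashomon F L lam \<epsilon> d. \<phi> j f d \<le> k} / measure \<mu> (rashomon F L lam \<epsilon> d)"

definition RID ::
  "'f measure \<Rightarrow> 'f set \<Rightarrow> ('f \<Rightarrow> 'p dataset \<Rightarrow> 'l \<Rightarrow> real) \<Rightarrow> 'l \<Rightarrow> real
   \<Rightarrow> (nat \<Rightarrow> 'f \<Rightarrow> 'p dataset \<Rightarrow> real) \<Rightarrow> nat \<Rightarrow> 'p dataset \<Rightarrow> real \<Rightarrow> real" where
  "RID \<mu> F L lam \<epsilon> \<phi> j D k =
     measure_pmf.expectation (bootstrap_pmf D) (\<lambda>d. rid_frac \<mu> F L lam \<epsilon> \<phi> j k d)"

definition RID_hat ::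
  "'f measure \<Rightarrow> 'f set \<Rightarrow> ('f \<Rightarrow> 'p dataset \<Rightarrow> 'l \<Rightarrow> real) \<Rightarrow> 'l \<Rightarrow> real
   \<Rightarrow> (nat \<Rightarrow> 'f \<Rightarrow> 'p dataset \<Rightarrow> real) \<Rightarrow> nat \<Rightarrow> 'p dataset list \<Rightarrow> real \<Rightarrow> real" where
  "RID_hat \<mu> F L lam \<epsilon> \<phi> j ds k =
     sum_list (map (\<lambda>d. rid_frac \<mu> F L lam \<epsilon> \<phi> j k d) ds) / real (length ds)"

text \<open>q-quantile of a CDF G on [lo, hi]: the (generalised-inverse) point where G reaches q.
  For strictly increasing G with G(k) = q solvable, this is the unique k with G(k) = q.\<close>
definition quantile_on :: "(real \<Rightarrow> real) \<Rightarrow> real \<Rightarrow> real \<Rightarrow> real \<Rightarrow> real" where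
  "quantile_on G lo hi q = Inf {k \<in> {lo..hi}. q \<le> G k}"

end

(* For a fixed threshold k, the estimate RID_hat_j(k) is the mean of B i.i.d. draws of a
   [0,1]-valued variable with mean RID_j(k), so Hoeffding's inequality makes it converge to
   RID_j(k) in probability.  Quantiles of strictly increasing CDFs inherit this: if the
   q-quantiles of RID_hat_j and RID_j are more than delta apart, then at one of the two fixed
   points k_q - delta, k_q + delta (k_q the q-quantile of RID_j) the level q lies strictly
   between the two CDFs, which forces a deviation of at least |RID_j(k_q +- delta) - q| > 0
   there. *)

theory Submission
  imports Defs "HOL-Real_Asymp.Real_Asymp"
begin

lemma replicate_pmf_conv_Pi_pmf:
  "replicate_pmf n p = map_pmf (\<lambda>f. map f [0..<n]) (Pi_pmf {..<n} dflt (\<lambda>_. p))"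
proof (induction n)
  case 0
  then show ?case by simp
next
  case (Suc n)
  have "replicate_pmf (Suc n) p = do {xs \<leftarrow> replicate_pmf n p; y \<leftarrow> p; return_pmf (xs @ [y])}"
    using replicate_pmf_distrib[of n 1 p]
    by (simp add: replicate_pmf_1 map_pmf_def bind_assoc_pmf bind_return_pmf)
  also have "\<dots> = map_pmf (\<lambda>f. map f [0..<Suc n]) (Pi_pmf (insert n {..<n}) dflt (\<lambda>_. p))"
    by (simp add: Suc.IH Pi_pmf_insert' map_pmf_def bind_assoc_pmf bind_return_pmf
          bind_commute_pmf[of p])
  finally show ?case by (simp add: lessThan_Suc)
qed

lemma prob_sample_mean_deviation_le:
  fixes h :: "'a \<Rightarrow> real"
  assumes h: "\<And>x. x \<in> set_pmf p \<Longrightarrow> h x \<in> {a..b}" and "a < b" and "B > 0" and "t \<ge> 0"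
  shows "measure_pmf.prob (replicate_pmf B p)
           {xs. t \<le> \<bar>sum_list (map h xs) / length xs - measure_pmf.expectation p h\<bar>}
         \<le> 2 * exp (-2 * real B * t\<^sup>2 / (b - a)\<^sup>2)"
proof -
  define M where "M = Pi_pmf {..<B} undefined (\<lambda>_. p)"
  have component: "map_pmf (\<lambda>f. f i) M = p" if "i < B" for i
    using that by (simp add: M_def Pi_pmf_component)
  have distr_component: "distr (measure_pmf M) borel (\<lambda>f. h (f i)) = distr (measure_pmf p) borel h"
    if "i < B" for i
  proof -
    have "distr (measure_pmf M) borel (\<lambda>f. h (f i))
        = distr (measure_pmf (map_pmf (\<lambda>f. f i) M)) borel h"
      unfolding map_pmf_rep_eq by (subst distr_distr) (auto simp: o_def)
    then show ?thesis
      using component[OF that] by simp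
  qed
  interpret Hoeffding_ineq_iid M "{..<B}" "\<lambda>i f. h (f i)" "\<lambda>f. h (f 0)" a b
    "measure_pmf.expectation p h"
  proof unfold_locales
    show "prob_space.indep_vars (measure_pmf M) (\<lambda>_. borel) (\<lambda>i f. h (f i)) {..<B}"
      unfolding M_def
      by (intro prob_space.indep_vars_compose2[OF _ indep_vars_Pi_pmf])
         (auto simp: measure_pmf.prob_space_axioms)
    show "distr (measure_pmf M) borel (\<lambda>f. h (f i)) = distr (measure_pmf M) borel (\<lambda>f. h (f 0))"
      if "i \<in> {..<B}" for i
      using that \<open>B > 0\<close> by (simp add: distr_component)
    show "AE f in measure_pmf M. h (f 0) \<in> {a..b}"
      using h component[OF \<open>B > 0\<close>] by (auto simp: AE_measure_pmf_iff set_map_pmf)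
    show "measure_pmf.expectation p h \<equiv> measure_pmf.expectation M (\<lambda>f. h (f 0))"
      using component[OF \<open>B > 0\<close>] by (intro eq_reflection) (metis integral_map_pmf)
  qed auto
  have "measure_pmf.prob (replicate_pmf B p)
           {xs. t \<le> \<bar>sum_list (map h xs) / length xs - measure_pmf.expectation p h\<bar>}
      = measure_pmf.prob M
          {f \<in> space M. \<bar>(\<Sum>i\<in>{..<B}. h (f i)) / card {..<B} - measure_pmf.expectation p h\<bar> \<ge> t}"
    unfolding replicate_pmf_conv_Pi_pmf[where dflt=undefined] M_def[symmetric]
    by (simp add: interv_sum_list_conv_sum_set_nat atLeast0LessThan vimage_def)
  also have "\<dots> \<le> 2 * exp (-2 * real B * t\<^sup>2 / (b - a)\<^sup>2)"
    using Hoeffding_ineq_abs_ge'[OF \<open>t \<ge> 0\<close> \<open>a < b\<close>] \<open>B > 0\<close> by (simp add: lessThan_empty_iff)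
  finally show ?thesis .
qed

lemma sample_mean_tendsto_in_probability:
  fixes h :: "'a \<Rightarrow> real"
  assumes h: "\<And>x. x \<in> set_pmf p \<Longrightarrow> h x \<in> {a..b}" and "a < b" and "t > 0"
  shows "(\<lambda>B. measure_pmf.prob (replicate_pmf B p)
           {xs. t \<le> \<bar>sum_list (map h xs) / length xs - measure_pmf.expectation p h\<bar>}) \<longlonglongrightarrow> 0"
proof (rule tendsto_sandwich[OF _ _ tendsto_const])
  show "\<forall>\<^sub>F B in sequentially. measure_pmf.prob (replicate_pmf B p)
           {xs. t \<le> \<bar>sum_list (map h xs) / length xs - measure_pmf.expectation p h\<bar>}
         \<le> 2 * exp (-2 * real B * t\<^sup>2 / (b - a)\<^sup>2)"
    using prob_sample_mean_deviation_le[of p h a b, OF h \<open>a < b\<close>] \<open>t > 0\<close>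
    by (intro eventually_sequentiallyI[of 1]) auto
  show "(\<lambda>B. 2 * exp (-2 * real B * t\<^sup>2 / (b - a)\<^sup>2)) \<longlonglongrightarrow> 0"
    using \<open>a < b\<close> \<open>t > 0\<close> by real_asymp
qed simp

lemma prob_tendsto_zero_mono:
  assumes "(\<lambda>n. measure_pmf.prob (P n) (A' n)) \<longlonglongrightarrow> 0"
    and "\<forall>\<^sub>F n in sequentially. A n \<inter> set_pmf (P n) \<subseteq> A' n"
  shows "(\<lambda>n. measure_pmf.prob (P n) (A n)) \<longlonglongrightarrow> 0"
proof (rule tendsto_sandwich[OF _ _ tendsto_const assms(1)])
  show "\<forall>\<^sub>F n in sequentially. measure_pmf.prob (P n) (A n) \<le> measure_pmf.prob (P n) (A' n)"
    using assms(2)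
  proof eventually_elim
    case (elim n)
    then show ?case
      by (metis measure_Int_set_pmf measure_pmf.finite_measure_mono sets_measure_pmf UNIV_I)
  qed
qed simp

lemma prob_Un_tendsto_zero:
  assumes "(\<lambda>n. measure_pmf.prob (P n) (A n)) \<longlonglongrightarrow> 0"
    and "(\<lambda>n. measure_pmf.prob (P n) (A' n)) \<longlonglongrightarrow> 0"
  shows "(\<lambda>n. measure_pmf.prob (P n) (A n \<union> A' n)) \<longlonglongrightarrow> 0"
proof (rule tendsto_sandwich[OF _ _ tendsto_const tendsto_add_zero[OF assms]])
  show "\<forall>\<^sub>F n in sequentially. measure_pmf.prob (P n) (A n \<union> A' n)
          \<le> measure_pmf.prob (P n) (A n) + measure_pmf.prob (P n) (A' n)"
    by (intro always_eventually allI measure_subadditive) auto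
qed simp

lemma prob_separated_tendsto_zero:
  fixes X :: "nat \<Rightarrow> 'a \<Rightarrow> real"
  assumes "\<And>t. t > 0 \<Longrightarrow> (\<lambda>n. measure_pmf.prob (P n) {\<omega>. t \<le> \<bar>X n \<omega> - c\<bar>}) \<longlonglongrightarrow> 0"
  shows "(\<lambda>n. measure_pmf.prob (P n) {\<omega>. c < q \<and> q < X n \<omega> \<or> X n \<omega> < q \<and> q < c}) \<longlonglongrightarrow> 0"
proof (cases "c = q")
  case False
  then show ?thesis
    by (intro prob_tendsto_zero_mono[OF assms[of "\<bar>c - q\<bar>"] always_eventually]) (auto simp: abs_if)
qed simp

lemma quantile_on_in_interval:
  assumes "lo \<le> hi" and "q \<le> G hi"
  shows "quantile_on G lo hi q \<in> {lo..hi}"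
proof -
  have hi: "hi \<in> {k \<in> {lo..hi}. q \<le> G k}"
    using assms by simp
  then have "lo \<le> Inf {k \<in> {lo..hi}. q \<le> G k}"
    by (intro cInf_greatest) auto
  moreover have "Inf {k \<in> {lo..hi}. q \<le> G k} \<le> hi"
    using hi by (intro cInf_lower) (auto intro: bdd_belowI[of _ lo])
  ultimately show ?thesis
    by (simp add: quantile_on_def)
qed

lemma below_quantile_on:
  assumes "x \<in> {lo..hi}" and "x < quantile_on G lo hi q"
  shows "G x < q"
proof (rule ccontr)
  assume "\<not> G x < q"
  then have "quantile_on G lo hi q \<le> x"
    using assms(1) unfolding quantile_on_def by (intro cInf_lower) (auto intro: bdd_belowI[of _ lo])
  with assms(2) show False
    by simp
qed

lemma above_quantile_on:
  assumes "strict_mono_on {lo..hi} G" and "q \<le> G hi"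
    and "x \<in> {lo..hi}" and "quantile_on G lo hi q < x"
  shows "q < G x"
proof -
  have "{k \<in> {lo..hi}. q \<le> G k} \<noteq> {}" and "bdd_below {k \<in> {lo..hi}. q \<le> G k}"
    using assms(2,3) by (auto intro: bdd_belowI[of _ lo])
  then obtain s where "s \<in> {lo..hi}" "q \<le> G s" "s < x"
    using assms(4) by (auto simp: quantile_on_def cInf_less_iff)
  then show ?thesis
    using strict_mono_onD[OF assms(1)] assms(3) by fastforce
qed

lemma quantile_on_separated:
  fixes G G' :: "real \<Rightarrow> real"
  assumes "lo \<le> hi"
    and G: "strict_mono_on {lo..hi} G" "q \<le> G hi"
    and G': "strict_mono_on {lo..hi} G'" "q \<le> G' hi"
    and "0 < \<delta>" and far: "\<delta> < \<bar>quantile_on G' lo hi q - quantile_on G lo hi q\<bar>"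
  obtains x where "x \<in> {quantile_on G lo hi q - \<delta>, quantile_on G lo hi q + \<delta>}"
    and "G x < q \<and> q < G' x \<or> G' x < q \<and> q < G x"
proof -
  let ?k = "quantile_on G lo hi q" and ?k' = "quantile_on G' lo hi q"
  have k: "?k \<in> {lo..hi}" and k': "?k' \<in> {lo..hi}"
    using quantile_on_in_interval \<open>lo \<le> hi\<close> G(2) G'(2) by blast+
  consider "?k + \<delta> < ?k'" | "?k' < ?k - \<delta>"
    using far by linarith
  then show ?thesis
  proof cases
    case 1
    then have "?k + \<delta> \<in> {lo..hi}"
      using k k' \<open>0 < \<delta>\<close> by simp
    then have "G' (?k + \<delta>) < q" and "q < G (?k + \<delta>)"
      using 1 below_quantile_on above_quantile_on[OF G] \<open>0 < \<delta>\<close> by auto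
    then show ?thesis
      using that by blast
  next
    case 2
    then have "?k - \<delta> \<in> {lo..hi}"
      using k k' \<open>0 < \<delta>\<close> by simp
    then have "G (?k - \<delta>) < q" and "q < G' (?k - \<delta>)"
      using 2 below_quantile_on above_quantile_on[OF G'] \<open>0 < \<delta>\<close> by auto
    then show ?thesis
      using that by blast
  qed
qed

lemma quantile_on_tendsto_in_probability:
  fixes G :: "real \<Rightarrow> real" and G\<^sub>n :: "nat \<Rightarrow> 'a \<Rightarrow> real \<Rightarrow> real"
  assumes "lo \<le> hi" and G: "strict_mono_on {lo..hi} G" "q \<le> G hi"
    and G\<^sub>n: "\<forall>\<^sub>F n in sequentially. \<forall>\<omega>\<in>set_pmf (P n).
                strict_mono_on {lo..hi} (G\<^sub>n n \<omega>) \<and> q \<le> G\<^sub>n n \<omega> hi"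
    and pointwise: "\<And>x t. t > 0 \<Longrightarrow>
                (\<lambda>n. measure_pmf.prob (P n) {\<omega>. t \<le> \<bar>G\<^sub>n n \<omega> x - G x\<bar>}) \<longlonglongrightarrow> 0"
    and "\<delta> > 0"
  shows "(\<lambda>n. measure_pmf.prob (P n)
           {\<omega>. \<delta> < \<bar>quantile_on (G\<^sub>n n \<omega>) lo hi q - quantile_on G lo hi q\<bar>}) \<longlonglongrightarrow> 0"
proof -
  define k where "k = quantile_on G lo hi q"
  define separated where
    "separated x n = {\<omega>. G x < q \<and> q < G\<^sub>n n \<omega> x \<or> G\<^sub>n n \<omega> x < q \<and> q < G x}" for x n
  have "(\<lambda>n. measure_pmf.prob (P n) (separated (k - \<delta>) n \<union> separated (k + \<delta>) n)) \<longlonglongrightarrow> 0"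
    unfolding separated_def
    by (intro prob_Un_tendsto_zero prob_separated_tendsto_zero pointwise)
  then show ?thesis
  proof (rule prob_tendsto_zero_mono)
    show "\<forall>\<^sub>F n in sequentially.
            {\<omega>. \<delta> < \<bar>quantile_on (G\<^sub>n n \<omega>) lo hi q - quantile_on G lo hi q\<bar>} \<inter> set_pmf (P n)
            \<subseteq> separated (k - \<delta>) n \<union> separated (k + \<delta>) n"
      using G\<^sub>n
    proof eventually_elim
      case (elim n)
      show ?case
      proof (intro subsetI)
        fix \<omega> assume \<omega>: "\<omega> \<in> {\<omega>. \<delta> < \<bar>quantile_on (G\<^sub>n n \<omega>) lo hi q - quantile_on G lo hi q\<bar>}
                              \<inter> set_pmf (P n)"
        then have far: "\<delta> < \<bar>quantile_on (G\<^sub>n n \<omega>) lo hi q - quantile_on G lo hi q\<bar>"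
          and mono: "strict_mono_on {lo..hi} (G\<^sub>n n \<omega>)" and top: "q \<le> G\<^sub>n n \<omega> hi"
          using elim by auto
        obtain x where "x \<in> {k - \<delta>, k + \<delta>}"
          and "G x < q \<and> q < G\<^sub>n n \<omega> x \<or> G\<^sub>n n \<omega> x < q \<and> q < G x"
          by (rule quantile_on_separated[OF \<open>lo \<le> hi\<close> G mono top \<open>\<delta> > 0\<close> far, folded k_def])
        then show "\<omega> \<in> separated (k - \<delta>) n \<union> separated (k + \<delta>) n"
          unfolding separated_def by blast
      qed
    qed
  qed
qed

lemma rid_frac_in_unit_interval:
  assumes "rashomon F L lam \<epsilon> d \<in> sets \<mu>" and "emeasure \<mu> (rashomon F L lam \<epsilon> d) < \<infinity>"
    and "{f \<in> rashomon F L lam \<epsilon> d. \<phi> j f d \<le> k} \<in> sets \<mu>"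
  shows "rid_frac \<mu> F L lam \<epsilon> \<phi> j k d \<in> {0..1}"
proof -
  have "measure \<mu> {f \<in> rashomon F L lam \<epsilon> d. \<phi> j f d \<le> k} \<le> measure \<mu> (rashomon F L lam \<epsilon> d)"
    using assms by (intro measure_mono_fmeasurable) (auto simp: fmeasurable_def)
  then show ?thesis
    by (auto simp: rid_frac_def divide_le_eq_1 zero_less_measure_iff)
qed

lemma rid_frac_eq_one:
  assumes "\<forall>f\<in>F. \<phi> j f d \<le> k" and "measure \<mu> (rashomon F L lam \<epsilon> d) \<noteq> 0"
  shows "rid_frac \<mu> F L lam \<epsilon> \<phi> j k d = 1"
proof -
  have "{f \<in> rashomon F L lam \<epsilon> d. \<phi> j f d \<le> k} = rashomon F L lam \<epsilon> d"
    using assms(1) by (auto simp: rashomon_def)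
  then show ?thesis
    using assms(2) by (simp add: rid_frac_def)
qed

lemma RID_eq_one:
  assumes "\<forall>d\<in>set_pmf (bootstrap_pmf D). rid_frac \<mu> F L lam \<epsilon> \<phi> j k d = 1"
  shows "RID \<mu> F L lam \<epsilon> \<phi> j D k = 1"
proof -
  have "RID \<mu> F L lam \<epsilon> \<phi> j D k = measure_pmf.expectation (bootstrap_pmf D) (\<lambda>_. 1)"
    unfolding RID_def using assms by (intro integral_cong_AE) (auto simp: AE_measure_pmf_iff)
  then show ?thesis
    by simp
qed

lemma RID_hat_eq_one:
  assumes "\<forall>d\<in>set_pmf (bootstrap_pmf D). rid_frac \<mu> F L lam \<epsilon> \<phi> j k d = 1"
    and "ds \<in> set_pmf (bootstrap_samples D B)" and "B > 0"
  shows "RID_hat \<mu> F L lam \<epsilon> \<phi> j ds k = 1"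
proof -
  have len: "length ds = B" and support: "set ds \<subseteq> set_pmf (bootstrap_pmf D)"
    using assms(2) by (auto simp: bootstrap_samples_def set_replicate_pmf)
  have "sum_list (map (\<lambda>d. rid_frac \<mu> F L lam \<epsilon> \<phi> j k d) ds) = sum_list (map (\<lambda>_. 1) ds)"
    using support assms(1) by (intro arg_cong[where f=sum_list] map_cong) auto
  then show ?thesis
    using len \<open>B > 0\<close> by (simp add: RID_hat_def sum_list_triv)
qed

lemma RID_hat_tendsto_RID_in_probability:
  assumes "\<forall>d\<in>set_pmf (bootstrap_pmf D). rid_frac \<mu> F L lam \<epsilon> \<phi> j k d \<in> {0..1}" and "t > 0"
  shows "(\<lambda>B. measure_pmf.prob (bootstrap_samples D B)
           {ds. t \<le> \<bar>RID_hat \<mu> F L lam \<epsilon> \<phi> j ds k - RID \<mu> F L lam \<epsilon> \<phi> j D k\<bar>}) \<longlonglongrightarrow> 0"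
  unfolding RID_hat_def RID_def bootstrap_samples_def
  using assms by (intro sample_mean_tendsto_in_probability[where a=0 and b=1]) auto

theorem mainTheorem5:
  fixes D :: "'p dataset"
    and \<mu> :: "'f measure" and F :: "'f set"
    and L :: "'f \<Rightarrow> 'p dataset \<Rightarrow> 'l \<Rightarrow> real" and lam :: 'l
    and \<epsilon> :: real
    and \<phi> :: "nat \<Rightarrow> 'f \<Rightarrow> 'p dataset \<Rightarrow> real" and j :: nat
    and \<phi>min \<phi>max :: real
  assumes n_pos: "length D > 0"
    and eps_pos: "\<epsilon> > 0"
    and F_ne: "F \<noteq> {}"
    and loss_bounded: "\<exists>M. \<forall>f\<in>F. \<forall>d. \<bar>L f d lam\<bar> \<le> M"
    and phi_bounded: "\<forall>f\<in>F. \<forall>d. \<phi>min \<le> \<phi> j f d \<and> \<phi> j f d \<le> \<phi>max"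
    and F_meas: "F \<subseteq> space \<mu>"
    and R_meas: "\<forall>d \<in> set_pmf (bootstrap_pmf D).
                   rashomon F L lam \<epsilon> d \<in> sets \<mu>
                 \<and> 0 < emeasure \<mu> (rashomon F L lam \<epsilon> d)
                 \<and> emeasure \<mu> (rashomon F L lam \<epsilon> d) < \<infinity>
                 \<and> (\<forall>k. {f \<in> rashomon F L lam \<epsilon> d. \<phi> j f d \<le> k} \<in> sets \<mu>)"
    and RID_strict: "strict_mono_on {\<phi>min..\<phi>max} (RID \<mu> F L lam \<epsilon> \<phi> j D)"
    and RID_hat_strict: "\<forall>B>0. \<forall>ds \<in> set_pmf (bootstrap_samples D B).
                 strict_mono_on {\<phi>min..\<phi>max} (RID_hat \<mu> F L lam \<epsilon> \<phi> j ds)"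
  shows "\<forall>\<delta>>0. ((\<lambda>B. measure_pmf.prob (bootstrap_samples D B)
            {ds. \<delta> < \<bar>quantile_on (RID_hat \<mu> F L lam \<epsilon> \<phi> j ds) \<phi>min \<phi>max (1/4)
                      - quantile_on (RID \<mu> F L lam \<epsilon> \<phi> j D) \<phi>min \<phi>max (1/4)\<bar>
               \<or> \<delta> < \<bar>quantile_on (RID_hat \<mu> F L lam \<epsilon> \<phi> j ds) \<phi>min \<phi>max (3/4)
                      - quantile_on (RID \<mu> F L lam \<epsilon> \<phi> j D) \<phi>min \<phi>max (3/4)\<bar>})
          \<longlonglongrightarrow> 0)"
proof -
  \<comment> \<open>Only measurability of the Rashomon sets, the range of \<phi> and the monotonicity
    assumptions enter.\<close>
  have "\<phi>min \<le> \<phi>max"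
    using F_ne phi_bounded by force
  have measure_pos: "measure \<mu> (rashomon F L lam \<epsilon> d) \<noteq> 0" if "d \<in> set_pmf (bootstrap_pmf D)" for d
    using R_meas that by (auto simp: measure_def enn2real_eq_0_iff)
  have frac_bounded: "\<forall>d\<in>set_pmf (bootstrap_pmf D). rid_frac \<mu> F L lam \<epsilon> \<phi> j k d \<in> {0..1}" for k
    using R_meas by (blast intro: rid_frac_in_unit_interval)
  have frac_top: "\<forall>d\<in>set_pmf (bootstrap_pmf D). rid_frac \<mu> F L lam \<epsilon> \<phi> j \<phi>max d = 1"
    using phi_bounded measure_pos by (auto intro!: rid_frac_eq_one)
  have quantile_consistent:
    "(\<lambda>B. measure_pmf.prob (bootstrap_samples D B)
       {ds. \<delta> < \<bar>quantile_on (RID_hat \<mu> F L lam \<epsilon> \<phi> j ds) \<phi>min \<phi>max q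
                 - quantile_on (RID \<mu> F L lam \<epsilon> \<phi> j D) \<phi>min \<phi>max q\<bar>}) \<longlonglongrightarrow> 0"
    if "\<delta> > 0" and "q \<le> 1" for \<delta> q :: real
  proof (rule quantile_on_tendsto_in_probability[OF \<open>\<phi>min \<le> \<phi>max\<close> RID_strict _ _ _ \<open>\<delta> > 0\<close>])
    show "q \<le> RID \<mu> F L lam \<epsilon> \<phi> j D \<phi>max"
      using RID_eq_one[OF frac_top] \<open>q \<le> 1\<close> by simp
    show "\<forall>\<^sub>F B in sequentially. \<forall>ds\<in>set_pmf (bootstrap_samples D B).
            strict_mono_on {\<phi>min..\<phi>max} (RID_hat \<mu> F L lam \<epsilon> \<phi> j ds)
            \<and> q \<le> RID_hat \<mu> F L lam \<epsilon> \<phi> j ds \<phi>max"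
      using RID_hat_strict RID_hat_eq_one[OF frac_top] \<open>q \<le> 1\<close>
      by (intro eventually_sequentiallyI[of 1]) (auto simp: Suc_le_eq)
  qed (rule RID_hat_tendsto_RID_in_probability[OF frac_bounded])
  show ?thesis
    using quantile_consistent[of _ "1/4"] quantile_consistent[of _ "3/4"]
    by (auto simp: Collect_disj_eq intro!: prob_Un_tendsto_zero)
qed

end
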